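(* Let $s\ge1$, let $q$ be a prime power, let $t\in\mathbb{N}_0$, let $\mathbf{T}:\mathbb{N}_0\to\mathbb{N}_0$ with $\mathbf{T}(m)\le\min(m,t)$ for all $m$, and let $C^{(1)},\ldots,C^{(s)}\in\mathbb{F}_q^{\mathbb{N}\times\mathbb{N}_0}$ be finite-row generating matrices such that for every $m$ with $m>\mathbf{T}(m)$ and all integers $d_1,\ldots,d_s\ge0$ with $1\le d_1+\cdots+d_s\le m-\mathbf{T}(m)$, the vectors $(c^{(i)}_{j,0},\ldots,c^{(i)}_{j,m-1})\in\mathbb{F}_q^m$, $1\le j\le d_i$, $1\le i\le s$, are linearly independent. Let $\alpha\in\mathbb{Z}_q$ and $s_n=n+\alpha$. Then the sequence $\mathcal{S}$ produced by Algorithm 2 with these matrices, the input $(s_n)_{n\ge0}$ and any choice of bijections $\psi_r,\lambda_{i,j}$ is a low-discrepancy sequence, i.e. $ND_N^*(\mathcal{S})=O((\log N)^s)$ for $N\ge2$, with implied constant independent of $N$.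
   Context: $\mathbb{F}_q$ is the finite field with $q$ elements, $D_q=\{0,\ldots,q-1\}$; $\mathbb{Z}_q$ is the ring of $q$-adic integers, each $z\in\mathbb{Z}_q$ having a unique representation $z=\sum_{r\ge0}a_rq^r$, $a_r\in D_q$. A matrix $(c^{(i)}_{j,r})_{j\ge1,r\ge0}$ is finite-row if each row has finitely many nonzero entries. Algorithm 2: choose bijections $\psi_r:D_q\to\mathbb{F}_q$ ($r\ge0$), finite-row matrices $C^{(i)}=(c^{(i)}_{j,r})$, bijections $\lambda_{i,j}:\mathbb{F}_q\to D_q$ and $(s_n)$ in $\mathbb{Z}_q$; with $s_n=\sum_ra_rq^r$ put $x_n^{(i)}=\sum_{j\ge1}\lambda_{i,j}(\sum_rc^{(i)}_{j,r}\psi_r(a_r))q^{-j}$, $\boldsymbol{x}_n=(x_n^{(1)},\ldots,x_n^{(s)})\in[0,1]^s$. Star discrepancy: $D_N^*(\mathcal{S})=\sup_J|A(J)/N-\mathrm{vol}(J)|$, sup over subintervals $J\subseteq[0,1]^s$ with one vertex at the origin, $A(J)=\#\{0\le n<N:\boldsymbol{x}_n\in J\}$. *)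

theory Defs
  imports "HOL-Analysis.Analysis"
begin

text \<open>q-adic integers are represented by their digit sequences
  (a r)_{r>=0} with 0 <= a r < q.\<close>

definition qadic :: "nat \<Rightarrow> (nat \<Rightarrow> nat) \<Rightarrow> bool" where
  "qadic q a \<longleftrightarrow> (\<forall>r. a r < q)"

text \<open>Digits of n + alpha in Z_q: the r-th digit of a sum is determined by
  the sum modulo q^(r+1).\<close>

definition qadic_add_nat :: "nat \<Rightarrow> nat \<Rightarrow> (nat \<Rightarrow> nat) \<Rightarrow> nat \<Rightarrow> nat" where
  "qadic_add_nat q n alpha r = ((n + (\<Sum>k\<le>r. alpha k * q ^ k)) div q ^ r) mod q"

definition finite_row :: "(nat \<Rightarrow> nat \<Rightarrow> 'f::zero) \<Rightarrow> bool" where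
  "finite_row C \<longleftrightarrow> (\<forall>j\<ge>1. finite {r. C j r \<noteq> 0})"

text \<open>Coordinate i of the point produced by Algorithm 2 from the digit sequence a
  of the input s_n.  C i j r is c^{(i)}_{j,r}, psi r is psi_r, lam i j is lambda_{i,j}.\<close>

definition alg2_coord ::
  "(nat \<Rightarrow> nat \<Rightarrow> 'f::field) \<Rightarrow> (nat \<Rightarrow> nat \<Rightarrow> nat \<Rightarrow> 'f) \<Rightarrow> (nat \<Rightarrow> nat \<Rightarrow> 'f \<Rightarrow> nat)
    \<Rightarrow> (nat \<Rightarrow> nat) \<Rightarrow> nat \<Rightarrow> real" where
  "alg2_coord psi C lam a i =
     (\<Sum>j. real (lam i (Suc j) (\<Sum>r\<in>{r. C i (Suc j) r \<noteq> 0}. C i (Suc j) r * psi r (a r)))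
            / real CARD('f) ^ Suc j)"

text \<open>Star discrepancy of the first N points of x (x n i = i-th coordinate of
  the n-th point, i = 1..s), over boxes [0,u_1) x ... x [0,u_s), u in [0,1]^s.\<close>

definition star_discrepancy :: "nat \<Rightarrow> nat \<Rightarrow> (nat \<Rightarrow> nat \<Rightarrow> real) \<Rightarrow> real" where
  "star_discrepancy s N x =
     (SUP u\<in>{u. \<forall>i\<in>{1..s}. 0 \<le> u i \<and> u i \<le> 1}.
        \<bar>real (card {n. n < N \<and> (\<forall>i\<in>{1..s}. x n i < u i)}) / real N - (\<Prod>i=1..s. u i)\<bar>)"

definition rows_lin_indep ::
  "nat \<Rightarrow> (nat \<Rightarrow> nat \<Rightarrow> nat \<Rightarrow> 'f::field) \<Rightarrow> nat \<Rightarrow> (nat \<Rightarrow> nat) \<Rightarrow> bool" where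
  "rows_lin_indep s C m d \<longleftrightarrow>
     (\<forall>e :: nat \<Rightarrow> nat \<Rightarrow> 'f.
        (\<forall>r<m. (\<Sum>i=1..s. \<Sum>j=1..d i. e i j * C i j r) = 0) \<longrightarrow>
        (\<forall>i\<in>{1..s}. \<forall>j\<in>{1..d i}. e i j = 0))"

end

(*
  Fix L with q^L >= N. The first L output digits of a coordinate locate it in a q-adic cell of side
  q^-L, so a box [0,u) is caught between two unions of grid cells whose volumes differ from vol [0,u)
  by O(s/N). Expanding each edge of such a union q-adically splits it into at most (1 + (q-1)L)^s
  elementary boxes, prescribing the first d_i output digits of coordinate i. An elementary box is a
  system of d_1 + ... + d_s linear equations over F_q in the input digits of s_n = n + alpha, and by
  the rank hypothesis these rows are already independent on the first d_1 + ... + d_s + t input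
  digits. Hence every block of q^(d_1+...+d_s+t) consecutive n contains exactly q^t solutions, and
  among any N consecutive n the count is N q^-(d_1+...+d_s) up to 2 q^t. Altogether
  N D_N <= (1 + (q-1)L)^s 2 q^t + 2s = O((log N)^s).
*)

theory Submission
  imports Defs
begin

section \<open>Solutions of linear systems over a finite field\<close>

definition lin_indep_rows :: "('l \<Rightarrow> 'c \<Rightarrow> 'f::field) \<Rightarrow> 'l set \<Rightarrow> 'c set \<Rightarrow> bool" where
  "lin_indep_rows R Rows Cols \<longleftrightarrow>
     (\<forall>e. (\<forall>c\<in>Cols. (\<Sum>l\<in>Rows. e l * R l c) = 0) \<longrightarrow> (\<forall>l\<in>Rows. e l = 0))"

definition linear_solutions ::
  "('l \<Rightarrow> 'c \<Rightarrow> 'f::field) \<Rightarrow> 'l set \<Rightarrow> 'c set \<Rightarrow> ('l \<Rightarrow> 'f) \<Rightarrow> ('c \<Rightarrow> 'f) set" where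
  "linear_solutions R Rows Cols g =
     {v \<in> Cols \<rightarrow>\<^sub>E UNIV. \<forall>l\<in>Rows. (\<Sum>c\<in>Cols. R l c * v c) = g l}"

lemma lin_indep_rows_nonzero_entry:
  fixes R :: "'l \<Rightarrow> 'c \<Rightarrow> 'f::field"
  assumes "lin_indep_rows R Rows Cols" "finite Rows" "l \<in> Rows"
  shows "\<exists>c\<in>Cols. R l c \<noteq> 0"
proof (rule ccontr)
  assume "\<not> ?thesis"
  then have "\<forall>c\<in>Cols. (\<Sum>l'\<in>Rows. of_bool (l' = l) * R l' c) = 0"
    using assms(2,3) by simp
  then have "of_bool (l = l) = (0::'f)"
    using assms(1)[unfolded lin_indep_rows_def, rule_format, of "\<lambda>l'. of_bool (l' = l)" l] assms(3)
    by simp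
  then show False
    by simp
qed

lemma lin_indep_rows_eliminate:
  assumes indep: "lin_indep_rows R (insert p Rows) Cols"
    and "finite Rows" "p \<notin> Rows" and pivot: "R p c \<noteq> 0"
  shows "lin_indep_rows (\<lambda>l r. R l r - R l c / R p c * R p r) Rows (Cols - {c})"
  unfolding lin_indep_rows_def
proof (intro allI impI)
  fix e assume e: "\<forall>r\<in>Cols - {c}. (\<Sum>l\<in>Rows. e l * (R l r - R l c / R p c * R p r)) = 0"
  define a where "a = (\<Sum>l\<in>Rows. e l * R l c) / R p c"
  have sum_eq: "(\<Sum>l\<in>Rows. e l * (R l r - R l c / R p c * R p r))
      = (\<Sum>l\<in>Rows. e l * R l r) - a * R p r" for r
    by (simp add: a_def algebra_simps sum_subtractf sum_distrib_left sum_distrib_right sum_divide_distrib)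
  have "(\<Sum>l\<in>Rows. (e(p := - a)) l * R l r) = (\<Sum>l\<in>Rows. e l * R l r)" for r
    using assms(3) by (intro sum.cong) auto
  then have insert_eq: "(\<Sum>l\<in>insert p Rows. (e(p := - a)) l * R l r)
      = (\<Sum>l\<in>Rows. e l * R l r) - a * R p r" for r
    using assms(2,3) by simp
  have "(\<Sum>l\<in>Rows. e l * R l r) - a * R p r = 0" if "r \<in> Cols" for r
  proof (cases "r = c")
    case True
    then show ?thesis using pivot by (simp add: a_def)
  next
    case False
    then show ?thesis using e that sum_eq[of r] by simp
  qed
  then have "(\<Sum>l\<in>insert p Rows. (e(p := - a)) l * R l r) = 0" if "r \<in> Cols" for r
    using that insert_eq by simp
  then have "\<forall>l\<in>insert p Rows. (e(p := - a)) l = 0"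
    using indep unfolding lin_indep_rows_def by blast
  then show "\<forall>l\<in>Rows. e l = 0"
    using assms(3) by (metis fun_upd_other insertCI)
qed

lemma linear_solutions_eliminate_iff:
  fixes R :: "'l \<Rightarrow> 'c \<Rightarrow> 'f::field"
  assumes "finite Cols" "c \<in> Cols" and pivot: "R p c \<noteq> 0"
  shows "v \<in> linear_solutions R (insert p Rows) Cols g \<longleftrightarrow>
    v \<in> extensional Cols \<and> v c = (g p - (\<Sum>r\<in>Cols - {c}. R p r * v r)) / R p c
    \<and> restrict v (Cols - {c}) \<in> linear_solutions (\<lambda>l r. R l r - R l c / R p c * R p r) Rows (Cols - {c})
         (\<lambda>l. g l - R l c / R p c * g p)"
proof -
  have split_sum: "(\<Sum>r\<in>Cols. f r) = f c + (\<Sum>r\<in>Cols - {c}. f r)" for f :: "'c \<Rightarrow> 'f"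
    using assms(1,2) by (simp add: sum.remove)
  have row_p: "(\<Sum>r\<in>Cols. R p r * v r) = g p \<longleftrightarrow> v c = (g p - (\<Sum>r\<in>Cols - {c}. R p r * v r)) / R p c"
    using split_sum[of "\<lambda>r. R p r * v r"] pivot by (auto simp: field_simps)
  have "(\<Sum>r\<in>Cols. R l r * v r) = (\<Sum>r\<in>Cols - {c}. (R l r - R l c / R p c * R p r) * v r)
      + R l c / R p c * (\<Sum>r\<in>Cols. R p r * v r)" for l
    using split_sum[of "\<lambda>r. (R l r - R l c / R p c * R p r) * v r"] pivot
    by (simp add: algebra_simps sum_subtractf sum_distrib_left)
  then have row_l: "(\<Sum>r\<in>Cols. R l r * v r) = g l \<longleftrightarrow>
      (\<Sum>r\<in>Cols - {c}. (R l r - R l c / R p c * R p r) * v r) = g l - R l c / R p c * g p"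
    if "(\<Sum>r\<in>Cols. R p r * v r) = g p" for l
    using that by (simp add: eq_diff_eq)
  show ?thesis
    unfolding linear_solutions_def using row_p row_l by (auto simp: PiE_def)
qed

text \<open>Eliminating the pivot \<open>R p c\<close>: a solution is determined by its restriction to the other
  columns, which is an arbitrary solution of the reduced system.\<close>

lemma card_linear_solutions_eliminate:
  fixes R :: "'l \<Rightarrow> 'c \<Rightarrow> 'f::field"
  assumes "finite Cols" "c \<in> Cols" "R p c \<noteq> 0"
  shows "card (linear_solutions R (insert p Rows) Cols g)
       = card (linear_solutions (\<lambda>l r. R l r - R l c / R p c * R p r) Rows (Cols - {c})
                 (\<lambda>l. g l - R l c / R p c * g p))"
    (is "card ?S = card ?S'")
proof -
  define pivot_value where "pivot_value w = (g p - (\<Sum>r\<in>Cols - {c}. R p r * w r)) / R p c" for w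
  have mem_S: "v \<in> ?S \<longleftrightarrow> v \<in> extensional Cols \<and> v c = pivot_value (restrict v (Cols - {c}))
      \<and> restrict v (Cols - {c}) \<in> ?S'" for v
    unfolding linear_solutions_eliminate_iff[where R = R and p = p and c = c and Rows = Rows and g = g, OF assms]
      pivot_value_def by simp
  have restrict_self: "restrict w (Cols - {c}) = w" if "w \<in> ?S'" for w
    using that by (auto simp: linear_solutions_def PiE_iff extensional_def fun_eq_iff)
  have "bij_betw (\<lambda>v. restrict v (Cols - {c})) ?S ?S'"
  proof (rule bij_betw_byWitness[where f' = "\<lambda>w. w(c := pivot_value w)"])
    show "\<forall>v\<in>?S. (restrict v (Cols - {c}))(c := pivot_value (restrict v (Cols - {c}))) = v"
      using assms(2) by (auto simp: mem_S fun_eq_iff extensional_def)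
    show "\<forall>w\<in>?S'. restrict (w(c := pivot_value w)) (Cols - {c}) = w"
      using restrict_self by simp
    show "(\<lambda>v. restrict v (Cols - {c})) ` ?S \<subseteq> ?S'"
      by (auto simp: mem_S)
    show "(\<lambda>w. w(c := pivot_value w)) ` ?S' \<subseteq> ?S"
    proof
      fix v assume "v \<in> (\<lambda>w. w(c := pivot_value w)) ` ?S'"
      then obtain w where w: "w \<in> ?S'" and v: "v = w(c := pivot_value w)"
        by blast
      then have "v \<in> extensional Cols"
        using assms(2) by (auto simp: linear_solutions_def PiE_def extensional_def)
      then show "v \<in> ?S"
        unfolding mem_S using w by (simp add: v restrict_self)
    qed
  qed
  then show ?thesis
    by (rule bij_betw_same_card)
qed

theorem card_linear_solutions:
  fixes R :: "'l \<Rightarrow> 'c \<Rightarrow> 'f::{finite,field}"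
  assumes "finite Rows" "finite Cols" "lin_indep_rows R Rows Cols"
  shows "card (linear_solutions R Rows Cols g) = CARD('f) ^ (card Cols - card Rows)"
  using assms
proof (induction Rows arbitrary: Cols R g rule: finite_induct)
  case empty
  then show ?case by (simp add: linear_solutions_def card_PiE)
next
  case (insert l0 Rows)
  obtain c where c: "c \<in> Cols" "R l0 c \<noteq> 0"
    using lin_indep_rows_nonzero_entry[OF insert.prems(2)] insert.hyps(1) by blast
  have "card (linear_solutions R (insert l0 Rows) Cols g)
      = card (linear_solutions (\<lambda>l r. R l r - R l c / R l0 c * R l0 r) Rows (Cols - {c})
                 (\<lambda>l. g l - R l c / R l0 c * g l0))"
    using insert.prems(1) c by (rule card_linear_solutions_eliminate)
  also have "\<dots> = CARD('f) ^ (card (Cols - {c}) - card Rows)"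
    using insert.prems insert.hyps c by (intro insert.IH lin_indep_rows_eliminate) auto
  also have "card (Cols - {c}) - card Rows = card Cols - card (insert l0 Rows)"
    using insert.hyps insert.prems(1) c(1) by simp
  finally show ?case .
qed

lemma lin_indep_rows_if_rows_lin_indep:
  fixes C :: "nat \<Rightarrow> nat \<Rightarrow> nat \<Rightarrow> 'f::field"
  assumes "rows_lin_indep s C m d"
  shows "lin_indep_rows (\<lambda>l r. C (fst l) (snd l) r) (SIGMA i:{1..s}. {1..d i}) {..<m}"
  unfolding lin_indep_rows_def
proof (intro allI impI)
  fix e :: "nat \<times> nat \<Rightarrow> 'f"
  assume h: "\<forall>r\<in>{..<m}. (\<Sum>l\<in>(SIGMA i:{1..s}. {1..d i}). e l * C (fst l) (snd l) r) = 0"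
  have "(\<Sum>i=1..s. \<Sum>j=1..d i. e (i, j) * C i j r) = 0" if "r < m" for r
    using h that by (simp add: sum.Sigma case_prod_beta)
  then have "\<forall>i\<in>{1..s}. \<forall>j\<in>{1..d i}. e (i, j) = 0"
    using assms unfolding rows_lin_indep_def by (drule_tac x = "\<lambda>i j. e (i, j)" in spec) simp
  then show "\<forall>l\<in>(SIGMA i:{1..s}. {1..d i}). e l = 0"
    by auto
qed

section \<open>\<open>q\<close>-adic digits\<close>

lemma eq_if_digits_eq:
  fixes q :: nat
  assumes "x < q ^ m" "y < q ^ m" "\<And>r. r < m \<Longrightarrow> x div q ^ r mod q = y div q ^ r mod q"
  shows "x = y"
  using assms
proof (induction m arbitrary: x y)
  case 0
  then show ?case by simp
next
  case (Suc m)
  then have "q > 0" by (cases "q = 0") auto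
  then have "x div q < q ^ m" "y div q < q ^ m"
    using Suc.prems(1,2) by (auto simp: div_less_iff_less_mult mult.commute)
  moreover have "x div q div q ^ r mod q = y div q div q ^ r mod q" if "r < m" for r
    using Suc.prems(3)[of "Suc r"] that by (simp add: div_mult2_eq)
  ultimately have "x div q = y div q"
    by (rule Suc.IH)
  moreover have "x mod q = y mod q"
    using Suc.prems(3)[of 0] by simp
  ultimately show ?case by (metis div_mult_mod_eq)
qed

lemma card_filter_bij_betw:
  assumes "bij_betw f A B" "S \<subseteq> B"
  shows "card {x \<in> A. f x \<in> S} = card S"
proof -
  have "inj_on f {x \<in> A. f x \<in> S}"
    using assms(1) by (auto simp: bij_betw_def intro: inj_on_subset)
  moreover have "f ` {x \<in> A. f x \<in> S} = S"
    using assms unfolding bij_betw_def by auto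
  ultimately show ?thesis
    using card_image by fastforce
qed

lemma bij_betw_digit_vectors:
  fixes psi :: "nat \<Rightarrow> nat \<Rightarrow> 'f::finite"
  assumes psi: "\<And>r. bij_betw (psi r) {0..<CARD('f)} UNIV"
  shows "bij_betw (\<lambda>x. restrict (\<lambda>r. psi r (x div CARD('f) ^ r mod CARD('f))) {..<m})
           {..<CARD('f) ^ m} ({..<m} \<rightarrow>\<^sub>E UNIV)"
    (is "bij_betw ?f ?A ?B")
proof -
  have inj: "inj_on ?f ?A"
  proof (rule inj_onI)
    fix x y assume "x \<in> ?A" "y \<in> ?A" and eq: "?f x = ?f y"
    have "x div CARD('f) ^ r mod CARD('f) = y div CARD('f) ^ r mod CARD('f)" if "r < m" for r
    proof -
      have "psi r (x div CARD('f) ^ r mod CARD('f)) = psi r (y div CARD('f) ^ r mod CARD('f))"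
        using fun_cong[OF eq, of r] that by simp
      then show ?thesis
        using psi[of r] by (auto simp: bij_betw_def dest: inj_onD)
    qed
    then show "x = y"
      using \<open>x \<in> ?A\<close> \<open>y \<in> ?A\<close> eq_if_digits_eq by blast
  qed
  moreover have "?f ` ?A \<subseteq> ?B"
    by (intro image_subsetI restrict_PiE) simp
  moreover have "card (?f ` ?A) = card ?B"
    using inj by (simp add: card_image card_PiE)
  ultimately show ?thesis
    by (simp add: bij_betw_def card_subset_eq finite_PiE)
qed

text \<open>Digit \<open>r\<close> of \<open>w + (\<Sum>k\<ge>m. alpha k * q ^ k)\<close>; the terms with \<open>k > r\<close> cannot affect it.\<close>

definition tail_digit :: "nat \<Rightarrow> (nat \<Rightarrow> nat) \<Rightarrow> nat \<Rightarrow> nat \<Rightarrow> nat \<Rightarrow> nat" where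
  "tail_digit q alpha m w r = ((w + (\<Sum>k\<in>{m..r}. alpha k * q ^ k)) div q ^ r) mod q"

lemma qadic_add_nat_eq_tail_digit:
  assumes "q > 0"
  shows "qadic_add_nat q n alpha r = tail_digit q alpha m (n + (\<Sum>k<m. alpha k * q ^ k)) r"
proof (cases "m \<le> r")
  case True
  have "(\<Sum>k\<le>r. alpha k * q ^ k) = (\<Sum>k\<in>{..<m} \<union> {m..r}. alpha k * q ^ k)"
    using True by (intro sum.cong) auto
  also have "\<dots> = (\<Sum>k<m. alpha k * q ^ k) + (\<Sum>k\<in>{m..r}. alpha k * q ^ k)"
    by (rule sum.union_disjoint) auto
  finally have "(\<Sum>k\<le>r. alpha k * q ^ k) = (\<Sum>k<m. alpha k * q ^ k) + (\<Sum>k\<in>{m..r}. alpha k * q ^ k)" .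
  then show ?thesis
    by (simp add: qadic_add_nat_def tail_digit_def add.assoc)
next
  case False
  have "(\<Sum>k<m. alpha k * q ^ k) = (\<Sum>k\<in>{..r} \<union> {Suc r..<m}. alpha k * q ^ k)"
    using False by (intro sum.cong) auto
  also have "\<dots> = (\<Sum>k\<le>r. alpha k * q ^ k) + (\<Sum>k\<in>{Suc r..<m}. alpha k * q ^ k)"
    by (rule sum.union_disjoint) auto
  finally have split: "(\<Sum>k<m. alpha k * q ^ k) = (\<Sum>k\<le>r. alpha k * q ^ k) + (\<Sum>k\<in>{Suc r..<m}. alpha k * q ^ k)" .
  have "q ^ Suc r dvd (\<Sum>k\<in>{Suc r..<m}. alpha k * q ^ k)"
    by (intro dvd_sum dvd_mult le_imp_power_dvd) auto
  then obtain Z where "(\<Sum>k\<in>{Suc r..<m}. alpha k * q ^ k) = q ^ Suc r * Z"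
    by (auto simp: dvd_def)
  then have "(\<Sum>k\<in>{Suc r..<m}. alpha k * q ^ k) = q ^ r * (q * Z)"
    by (simp add: mult_ac)
  then have "(n + (\<Sum>k<m. alpha k * q ^ k)) div q ^ r
      = ((n + (\<Sum>k\<le>r. alpha k * q ^ k)) + q ^ r * (q * Z)) div q ^ r"
    by (simp add: split add.assoc)
  also have "\<dots> = q * Z + (n + (\<Sum>k\<le>r. alpha k * q ^ k)) div q ^ r"
    using assms by (intro div_mult_self2) simp
  finally show ?thesis
    using False by (simp add: qadic_add_nat_def tail_digit_def)
qed

lemma tail_digit_low:
  assumes "q > 0" "r < m"
  shows "tail_digit q alpha m (h * q ^ m + \<rho>) r = \<rho> div q ^ r mod q"
proof -
  have "h * q ^ m + \<rho> = \<rho> + q ^ r * (q * (h * q ^ (m - Suc r)))"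
    using assms(2) by (simp add: mult_ac flip: power_Suc power_add)
  also have "\<dots> div q ^ r = \<rho> div q ^ r + q * (h * q ^ (m - Suc r))"
    using assms(1) by simp
  finally have "(h * q ^ m + \<rho>) div q ^ r = \<rho> div q ^ r + q * (h * q ^ (m - Suc r))" .
  then show ?thesis
    using assms(2) by (simp add: tail_digit_def)
qed

lemma tail_digit_high:
  assumes "q > 0" "\<rho> < q ^ m" "m \<le> r"
  shows "tail_digit q alpha m (h * q ^ m + \<rho>) r = tail_digit q alpha m (h * q ^ m) r"
proof -
  have "q ^ m dvd (\<Sum>k\<in>{m..r}. alpha k * q ^ k)"
    by (intro dvd_sum dvd_mult le_imp_power_dvd) auto
  then obtain S where S: "(\<Sum>k\<in>{m..r}. alpha k * q ^ k) = q ^ m * S"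
    by (auto simp: dvd_def)
  have "h * q ^ m + \<rho> + q ^ m * S = \<rho> + q ^ m * (h + S)" "h * q ^ m + q ^ m * S = q ^ m * (h + S)"
    by (simp_all add: algebra_simps)
  then have "(h * q ^ m + \<rho> + q ^ m * S) div q ^ m = h + S" "(h * q ^ m + q ^ m * S) div q ^ m = h + S"
    using assms(1,2) by simp_all
  moreover have "q ^ r = q ^ m * q ^ (r - m)"
    using assms(3) by (simp flip: power_add)
  ultimately show ?thesis
    by (simp add: tail_digit_def S div_mult2_eq)
qed

section \<open>Approximate counting\<close>

lemma card_periodic_below_multiple:
  assumes period: "\<And>h. card {\<rho>. \<rho> < M \<and> P (h * M + \<rho>)} = Q"
  shows "card {w. w < h * M \<and> P w} = h * Q"
proof (induction h)
  case 0
  then show ?case by simp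
next
  case (Suc h)
  let ?block = "(\<lambda>\<rho>. h * M + \<rho>) ` {\<rho>. \<rho> < M \<and> P (h * M + \<rho>)}"
  have "{w. w < Suc h * M \<and> P w} = {w. w < h * M \<and> P w} \<union> ?block"
  proof (intro set_eqI iffI)
    fix w assume "w \<in> {w. w < Suc h * M \<and> P w}"
    then show "w \<in> {w. w < h * M \<and> P w} \<union> ?block"
      by (cases "w < h * M") (auto intro!: image_eqI[of _ _ "w - h * M"])
  qed auto
  moreover have "card ?block = Q"
    using period by (subst card_image) (auto simp: inj_on_def)
  moreover have "{w. w < h * M \<and> P w} \<inter> ?block = {}"
    by auto
  ultimately show ?case
    using Suc.IH by (simp add: card_Un_disjoint)
qed

lemma card_periodic_below_approx:
  assumes "M > 0" and period: "\<And>h. card {\<rho>. \<rho> < M \<and> P (h * M + \<rho>)} = Q"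
  shows "\<bar>real (card {w. w < b \<and> P w}) - real b * Q / M\<bar> \<le> Q"
proof -
  define h where "h = b div M"
  have hb: "h * M \<le> b" "b < Suc h * M"
    using \<open>M > 0\<close> by (auto simp: h_def dividend_less_div_times)
  have "card {w. w < h * M \<and> P w} \<le> card {w. w < b \<and> P w}"
    "card {w. w < b \<and> P w} \<le> card {w. w < Suc h * M \<and> P w}"
    using hb by (auto intro!: card_mono)
  then have "real h * Q \<le> card {w. w < b \<and> P w}" "card {w. w < b \<and> P w} \<le> real h * Q + Q"
    unfolding card_periodic_below_multiple[OF period] by (simp_all add: algebra_simps flip: of_nat_mult)
  moreover have "real h * Q \<le> real b * Q / M" "real b * Q / M \<le> real h * Q + Q"
  proof -
    have "real h * M * Q \<le> real b * Q" "real b * Q \<le> (real h + 1) * M * Q"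
      using hb by (intro mult_right_mono; simp add: algebra_simps flip: of_nat_mult of_nat_add)+
    then show "real h * Q \<le> real b * Q / M" "real b * Q / M \<le> real h * Q + Q"
      using \<open>M > 0\<close> by (simp_all add: pos_le_divide_eq pos_divide_le_eq algebra_simps)
  qed
  ultimately show ?thesis
    unfolding abs_le_iff by linarith
qed

lemma card_shifted_below:
  fixes N a :: nat
  shows "card {n. n < N \<and> P (n + a)} = card {w. w < a + N \<and> P w} - card {w. w < a \<and> P w}"
proof -
  have "{w. w < a + N \<and> P w} = {w. w < a \<and> P w} \<union> (\<lambda>n. n + a) ` {n. n < N \<and> P (n + a)}"
  proof (intro set_eqI iffI)
    fix w assume "w \<in> {w. w < a + N \<and> P w}"
    then show "w \<in> {w. w < a \<and> P w} \<union> (\<lambda>n. n + a) ` {n. n < N \<and> P (n + a)}"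
      by (cases "w < a") (auto intro!: image_eqI[of _ _ "w - a"])
  qed auto
  moreover have "card ((\<lambda>n. n + a) ` {n. n < N \<and> P (n + a)}) = card {n. n < N \<and> P (n + a)}"
    by (simp add: card_image)
  ultimately have "card {w. w < a + N \<and> P w} = card {w. w < a \<and> P w} + card {n. n < N \<and> P (n + a)}"
    using card_Un_disjoint[of "{w. w < a \<and> P w}" "(\<lambda>n. n + a) ` {n. n < N \<and> P (n + a)}"]
    by auto
  then show ?thesis by simp
qed

lemma card_shifted_periodic_approx:
  fixes N a :: nat
  assumes "M > 0" and period: "\<And>h. card {\<rho>. \<rho> < M \<and> P (h * M + \<rho>)} = Q"
  shows "\<bar>real (card {n. n < N \<and> P (n + a)}) - real N * Q / M\<bar> \<le> 2 * real Q"
proof -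
  have "card {w. w < a \<and> P w} \<le> card {w. w < a + N \<and> P w}"
    by (auto intro!: card_mono)
  then have "real (card {n. n < N \<and> P (n + a)})
      = real (card {w. w < a + N \<and> P w}) - real (card {w. w < a \<and> P w})"
    by (simp add: card_shifted_below of_nat_diff)
  moreover have "\<bar>real (card {w. w < a + N \<and> P w}) - (real a * Q / M + real N * Q / M)\<bar> \<le> Q"
    using card_periodic_below_approx[OF assms, of "a + N"] by (simp add: add_divide_distrib distrib_right)
  moreover have "\<bar>real (card {w. w < a \<and> P w}) - real a * Q / M\<bar> \<le> Q"
    using card_periodic_below_approx[OF assms] .
  ultimately show ?thesis
    unfolding abs_le_iff by linarith
qed

definition count_approx :: "nat \<Rightarrow> (nat \<Rightarrow> bool) \<Rightarrow> real \<Rightarrow> real \<Rightarrow> bool" where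
  "count_approx N P v e \<longleftrightarrow> \<bar>real (card {n. n < N \<and> P n}) - real N * v\<bar> \<le> e"

lemma count_approx_error_nonneg: "count_approx N P v e \<Longrightarrow> 0 \<le> e"
  unfolding count_approx_def by linarith

lemma count_approx_cong:
  assumes "count_approx N P v e" "\<And>n. n < N \<Longrightarrow> P n \<longleftrightarrow> P' n" "v = v'" "e \<le> e'"
  shows "count_approx N P' v' e'"
proof -
  have "{n. n < N \<and> P n} = {n. n < N \<and> P' n}"
    using assms(2) by auto
  then show ?thesis
    using assms(1,3,4) unfolding count_approx_def by simp
qed

lemma count_approx_disjoint_Un:
  assumes "count_approx N P v e" "count_approx N P' v' e'" "\<And>n. \<not> (P n \<and> P' n)"
  shows "count_approx N (\<lambda>n. P n \<or> P' n) (v + v') (e + e')"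
proof -
  have "{n. n < N \<and> (P n \<or> P' n)} = {n. n < N \<and> P n} \<union> {n. n < N \<and> P' n}"
    by auto
  then have "card {n. n < N \<and> (P n \<or> P' n)} = card {n. n < N \<and> P n} + card {n. n < N \<and> P' n}"
    using assms(3) by (simp add: card_Un_disjoint disjoint_iff)
  then show ?thesis
    using assms(1,2) unfolding count_approx_def by (simp add: algebra_simps abs_le_iff)
qed

lemma count_approx_disjoint_UN:
  assumes "finite I" "\<And>i. i \<in> I \<Longrightarrow> count_approx N (P i) (v i) (e i)"
    and "\<And>i j n. i \<in> I \<Longrightarrow> j \<in> I \<Longrightarrow> i \<noteq> j \<Longrightarrow> \<not> (P i n \<and> P j n)"
  shows "count_approx N (\<lambda>n. \<exists>i\<in>I. P i n) (\<Sum>i\<in>I. v i) (\<Sum>i\<in>I. e i)"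
  using assms
proof (induction I rule: finite_induct)
  case empty
  then show ?case by (simp add: count_approx_def)
next
  case (insert i I)
  have "count_approx N (\<lambda>n. P i n \<or> (\<exists>j\<in>I. P j n)) (v i + (\<Sum>j\<in>I. v j)) (e i + (\<Sum>j\<in>I. e j))"
    using insert by (intro count_approx_disjoint_Un) blast+
  then show ?case
    using insert.hyps by (simp add: count_approx_def)
qed

lemma count_approx_sandwich:
  assumes "count_approx N P\<^sub>1 v\<^sub>1 E" "count_approx N P\<^sub>2 v\<^sub>2 E"
    and "\<And>n. P\<^sub>1 n \<Longrightarrow> P n" "\<And>n. P n \<Longrightarrow> P\<^sub>2 n"
    and "\<bar>N * v\<^sub>1 - N * v\<bar> \<le> D" "\<bar>N * v\<^sub>2 - N * v\<bar> \<le> D"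
  shows "count_approx N P v (E + D)"
proof -
  have "card {n. n < N \<and> P\<^sub>1 n} \<le> card {n. n < N \<and> P n}" "card {n. n < N \<and> P n} \<le> card {n. n < N \<and> P\<^sub>2 n}"
    using assms(3,4) by (auto intro!: card_mono)
  then show ?thesis
    using assms(1,2,5,6) unfolding count_approx_def abs_le_iff of_nat_le_iff[symmetric] by linarith
qed

lemma last_digit_block_iff:
  fixes q x A :: nat
  assumes "q > 0"
  shows "x \<in> {q * (A div q)..<A} \<longleftrightarrow> x < A \<and> \<not> x div q < A div q"
  using assms by (auto simp: less_eq_div_iff_mult_less_eq div_less_iff_less_mult mult.commute)

lemma less_iff_div_less_or_last_digit:
  fixes q x A :: nat
  assumes "q > 0"
  shows "x < A \<longleftrightarrow> x div q < A div q \<or> x \<in> {q * (A div q)..<A}"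
proof -
  have "x div q < A div q \<Longrightarrow> x < A"
    using assms by (metis div_less_iff_less_mult less_le_trans mult.commute times_div_less_eq_dividend)
  then show ?thesis
    using last_digit_block_iff[OF assms] by blast
qed

lemma count_approx_refine_last_digit:
  fixes P P' :: "nat \<Rightarrow> nat"
  assumes "q > 0" and P': "\<And>n. P' n div q = P n"
    and low: "count_approx N (\<lambda>n. P n < A div q \<and> R n) v e"
    and cells: "\<And>c. q * (A div q) \<le> c \<Longrightarrow> c < A \<Longrightarrow> count_approx N (\<lambda>n. P' n = c \<and> R n) w e'"
  shows "count_approx N (\<lambda>n. P' n < A \<and> R n) (v + real (A mod q) * w) (e + real (A mod q) * e')"
proof -
  let ?Last = "{q * (A div q)..<A}"
  have "count_approx N (\<lambda>n. \<exists>c\<in>?Last. P' n = c \<and> R n) (\<Sum>c\<in>?Last. w) (\<Sum>c\<in>?Last. e')"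
    using cells by (intro count_approx_disjoint_UN) auto
  moreover have "\<not> ((P n < A div q \<and> R n) \<and> (\<exists>c\<in>?Last. P' n = c \<and> R n))" for n
    unfolding P'[of n, symmetric] using last_digit_block_iff[OF \<open>q > 0\<close>] by blast
  ultimately have "count_approx N (\<lambda>n. (P n < A div q \<and> R n) \<or> (\<exists>c\<in>?Last. P' n = c \<and> R n))
      (v + (\<Sum>c\<in>?Last. w)) (e + (\<Sum>c\<in>?Last. e'))"
    using low by (intro count_approx_disjoint_Un)
  moreover have "card ?Last = A mod q"
    by (simp add: minus_mult_div_eq_mod)
  moreover have "(P n < A div q \<and> R n) \<or> (\<exists>c\<in>?Last. P' n = c \<and> R n) \<longleftrightarrow> P' n < A \<and> R n" for n
    using less_iff_div_less_or_last_digit[OF \<open>q > 0\<close>, of "P' n" A] unfolding P' by auto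
  ultimately show ?thesis
    by (auto elim!: count_approx_cong simp only: sum_constant)
qed

text \<open>The q-adic intervals \<open>P L n < A\<close> split level by level into one interval of the coarser level and
  at most \<open>q - 1\<close> cells of the current level.\<close>

lemma count_approx_prefix_less:
  fixes P :: "nat \<Rightarrow> nat \<Rightarrow> nat"
  assumes "q > 0" and P_0: "\<And>n. P 0 n = 0" and P_Suc: "\<And>l n. P (Suc l) n div q = P l n"
    and elementary: "\<And>l c. l \<le> L \<Longrightarrow> c < q ^ l \<Longrightarrow>
      count_approx N (\<lambda>n. P l n = c \<and> R n) (V / real q ^ l) e"
    and "A \<le> q ^ L"
  shows "count_approx N (\<lambda>n. P L n < A \<and> R n) (V * A / real q ^ L) ((1 + (real q - 1) * L) * e)"
  using elementary \<open>A \<le> q ^ L\<close>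
proof (induction L arbitrary: A)
  case 0
  then have elem: "count_approx N (\<lambda>n. P 0 n = 0 \<and> R n) V e"
    by fastforce
  consider "A = 0" | "A = 1"
    using "0.prems"(2) by fastforce
  then show ?case
    by cases (use elem count_approx_error_nonneg[OF elem] in \<open>auto simp: P_0 count_approx_def\<close>)
next
  case (Suc L)
  have "A div q \<le> q ^ L"
    using div_le_mono[OF Suc.prems(2), of q] \<open>q > 0\<close> by simp
  then have low: "count_approx N (\<lambda>n. P L n < A div q \<and> R n)
      (V * (A div q) / real q ^ L) ((1 + (real q - 1) * L) * e)"
    using Suc.prems(1) by (intro Suc.IH) auto
  have cells: "count_approx N (\<lambda>n. P (Suc L) n = c \<and> R n) (V / real q ^ Suc L) e" if "c < A" for c
    using that Suc.prems by (intro Suc.prems(1)) auto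
  have "count_approx N (\<lambda>n. P (Suc L) n < A \<and> R n)
      (V * (A div q) / real q ^ L + real (A mod q) * (V / real q ^ Suc L))
      ((1 + (real q - 1) * L) * e + real (A mod q) * e)"
    using cells by (intro count_approx_refine_last_digit[OF \<open>q > 0\<close> P_Suc low])
  moreover have "real A = real q * real (A div q) + real (A mod q)"
    by (metis div_mult_mod_eq of_nat_add of_nat_mult mult.commute)
  moreover have "real (A mod q) * e \<le> (real q - 1) * e"
  proof (rule mult_right_mono)
    show "real (A mod q) \<le> real q - 1"
      using mod_less_divisor[OF \<open>q > 0\<close>, of A] by linarith
    show "0 \<le> e"
      using count_approx_error_nonneg[OF Suc.prems(1)[of 0 0]] by simp
  qed
  ultimately show ?case
    using \<open>q > 0\<close> by (auto elim!: count_approx_cong simp: field_simps)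
qed

section \<open>Digit expansions\<close>

text \<open>\<open>digits_value q y l\<close> is the integer with q-adic digits \<open>y 1, \<dots>, y l\<close>, most significant first.\<close>

primrec digits_value :: "nat \<Rightarrow> (nat \<Rightarrow> nat) \<Rightarrow> nat \<Rightarrow> nat" where
  "digits_value q y 0 = 0"
| "digits_value q y (Suc l) = q * digits_value q y l + y (Suc l)"

context
  fixes q :: nat and y :: "nat \<Rightarrow> nat"
  assumes digits: "\<And>j. y (Suc j) < q"
begin

lemma digits_value_less: "digits_value q y l < q ^ l"
proof (induction l)
  case 0
  then show ?case by simp
next
  case (Suc l)
  have "digits_value q y (Suc l) < q * digits_value q y l + q"
    using digits[of l] by simp
  also have "\<dots> \<le> q * q ^ l"
    using Suc by (metis add.commute mult_Suc_right mult_le_mono2 Suc_le_eq)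
  finally show ?case by simp
qed

lemma digits_value_Suc_div: "digits_value q y (Suc l) div q = digits_value q y l"
  using digits[of l] by simp

lemma digits_value_eq_iff:
  "b < q ^ l \<Longrightarrow> digits_value q y l = b \<longleftrightarrow> (\<forall>j\<in>{1..l}. y j = b div q ^ (l - j) mod q)"
proof (induction l arbitrary: b)
  case 0
  then show ?case by simp
next
  case (Suc l)
  have "q > 0"
    using digits[of 0] by simp
  then have "b div q < q ^ l"
    using Suc.prems by (simp add: div_less_iff_less_mult mult.commute)
  have "digits_value q y (Suc l) = b \<longleftrightarrow> digits_value q y l = b div q \<and> y (Suc l) = b mod q"
    using digits[of l] by auto
  also have "\<dots> \<longleftrightarrow> (\<forall>j\<in>{1..l}. y j = b div q div q ^ (l - j) mod q) \<and> y (Suc l) = b mod q"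
    using Suc.IH[OF \<open>b div q < q ^ l\<close>] by simp
  also have "\<dots> \<longleftrightarrow> (\<forall>j\<in>{1..Suc l}. y j = b div q ^ (Suc l - j) mod q)"
  proof -
    have "b div q div q ^ (l - j) = b div q ^ (Suc l - j)" if "j \<in> {1..l}" for j
      using that by (simp add: div_mult2_eq Suc_diff_le)
    then show ?thesis by (auto simp: atLeastAtMostSuc_conv)
  qed
  finally show ?case .
qed

lemma digits_value_eq_sum:
  "real (digits_value q y l) / real q ^ l = (\<Sum>j<l. real (y (Suc j)) / real q ^ Suc j)"
proof (induction l)
  case (Suc l)
  have "q > 0"
    using digits[of 0] by simp
  then have "real (digits_value q y (Suc l)) / real q ^ Suc l
      = real (digits_value q y l) / real q ^ l + real (y (Suc l)) / real q ^ Suc l"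
    by (simp add: field_simps)
  then show ?case
    using Suc by simp
qed simp

lemma digit_term_le: "real (y (Suc j)) / real q ^ Suc j \<le> (real q - 1) * (1 / real q) ^ Suc j"
proof -
  have "real (y (Suc j)) \<le> real q - 1"
    using digits[of j] by (simp add: Suc_le_eq flip: of_nat_Suc of_nat_le_iff)
  then show ?thesis
    by (simp add: power_divide divide_right_mono)
qed

lemma digit_series_summable:
  assumes "q \<ge> 2"
  shows "summable (\<lambda>j. real (y (Suc j)) / real q ^ Suc j)"
proof (rule summable_comparison_test')
  show "summable (\<lambda>j. (real q - 1) * (1 / real q) ^ Suc j)"
    using assms by (intro summable_mult summable_Suc_iff[THEN iffD2] summable_geometric) simp
  show "norm (real (y (Suc j)) / real q ^ Suc j) \<le> (real q - 1) * (1 / real q) ^ Suc j" for j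
    using digit_term_le[of j] by simp
qed

lemma digit_series_tail_le:
  assumes "q \<ge> 2"
  shows "(\<Sum>j. real (y (Suc (j + L))) / real q ^ Suc (j + L)) \<le> 1 / real q ^ L"
proof -
  have "(\<lambda>j. (real q - 1) * (1 / real q) ^ Suc (j + L))
      sums ((real q - 1) * (1 / real q) ^ Suc L * (1 / (1 - 1 / real q)))"
    using assms sums_mult[OF geometric_sums[of "1 / real q"], of "(real q - 1) * (1 / real q) ^ Suc L"]
    by (simp add: power_add mult_ac)
  moreover have "(real q - 1) * (1 / real q) ^ Suc L * (1 / (1 - 1 / real q)) = 1 / real q ^ L"
    using assms by (simp add: power_divide field_simps)
  moreover have "summable (\<lambda>j. real (y (Suc (j + L))) / real q ^ Suc (j + L))"
    using digit_series_summable[OF assms] by (subst summable_iff_shift[of _ L]) (simp add: add.commute)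
  ultimately show ?thesis
    using digit_term_le by (metis (no_types, lifting) sums_unique suminf_le sums_summable add_Suc_right)
qed

lemma digit_expansion_bounds:
  assumes "q \<ge> 2"
  defines "x \<equiv> \<Sum>j. real (y (Suc j)) / real q ^ Suc j"
  shows "real (digits_value q y L) / real q ^ L \<le> x \<and> x \<le> (real (digits_value q y L) + 1) / real q ^ L"
proof -
  have "x = (\<Sum>j. real (y (Suc (j + L))) / real q ^ Suc (j + L)) + real (digits_value q y L) / real q ^ L"
    unfolding x_def digits_value_eq_sum
    by (rule suminf_split_initial_segment[OF digit_series_summable[OF \<open>q \<ge> 2\<close>]])
  moreover have "0 \<le> (\<Sum>j. real (y (Suc (j + L))) / real q ^ Suc (j + L))"
    using summable_ignore_initial_segment[OF digit_series_summable[OF \<open>q \<ge> 2\<close>], of L]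
    by (rule suminf_nonneg) simp
  ultimately show ?thesis
    using digit_series_tail_le[OF \<open>q \<ge> 2\<close>, of L] by (simp add: add_divide_distrib)
qed

end

section \<open>Boxes and star discrepancy\<close>

lemma prod_abs_diff_le_sum:
  fixes a b :: "'i \<Rightarrow> real"
  assumes "finite I" "\<forall>i\<in>I. 0 \<le> a i \<and> a i \<le> 1 \<and> 0 \<le> b i \<and> b i \<le> 1"
  shows "\<bar>(\<Prod>i\<in>I. a i) - (\<Prod>i\<in>I. b i)\<bar> \<le> (\<Sum>i\<in>I. \<bar>a i - b i\<bar>)"
  using assms
proof (induction I rule: finite_induct)
  case empty
  then show ?case by simp
next
  case (insert k I)
  have a: "0 \<le> (\<Prod>i\<in>I. a i)" "(\<Prod>i\<in>I. a i) \<le> 1"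
    using insert.prems by (auto intro: prod_nonneg prod_le_1)
  have b: "0 \<le> b k" "b k \<le> 1"
    using insert.prems by auto
  have "a k * (\<Prod>i\<in>I. a i) - b k * (\<Prod>i\<in>I. b i)
      = (a k - b k) * (\<Prod>i\<in>I. a i) + b k * ((\<Prod>i\<in>I. a i) - (\<Prod>i\<in>I. b i))"
    by (simp add: algebra_simps)
  then have "\<bar>a k * (\<Prod>i\<in>I. a i) - b k * (\<Prod>i\<in>I. b i)\<bar>
      \<le> \<bar>a k - b k\<bar> * (\<Prod>i\<in>I. a i) + b k * \<bar>(\<Prod>i\<in>I. a i) - (\<Prod>i\<in>I. b i)\<bar>"
    using a b by (simp add: abs_mult) (metis abs_mult abs_of_nonneg abs_triangle_ineq)
  also have "\<dots> \<le> \<bar>a k - b k\<bar> * 1 + 1 * (\<Sum>i\<in>I. \<bar>a i - b i\<bar>)"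
    using a b insert.IH insert.prems by (intro add_mono mult_mono) (auto intro: sum_nonneg)
  finally show ?case
    using insert.hyps by simp
qed

lemma grid_volume_approx:
  fixes a u :: "'i \<Rightarrow> real" and Q :: real
  assumes "finite I" "Q > 0" "real N \<le> Q"
    and "\<forall>i\<in>I. 0 \<le> u i \<and> u i \<le> 1 \<and> 0 \<le> a i \<and> a i \<le> Q \<and> \<bar>a i - u i * Q\<bar> \<le> 2"
  shows "\<bar>N * (\<Prod>i\<in>I. a i / Q) - N * (\<Prod>i\<in>I. u i)\<bar> \<le> 2 * real (card I)"
proof -
  have "\<bar>(\<Prod>i\<in>I. a i / Q) - (\<Prod>i\<in>I. u i)\<bar> \<le> (\<Sum>i\<in>I. \<bar>a i / Q - u i\<bar>)"
    using assms by (intro prod_abs_diff_le_sum) auto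
  also have "\<dots> \<le> (\<Sum>i\<in>I. 2 / Q)"
  proof (rule sum_mono)
    fix i assume "i \<in> I"
    have "\<bar>a i / Q - u i\<bar> = \<bar>a i - u i * Q\<bar> / Q"
      using \<open>Q > 0\<close> by (simp add: field_simps abs_divide)
    then show "\<bar>a i / Q - u i\<bar> \<le> 2 / Q"
      using assms(4) \<open>i \<in> I\<close> \<open>Q > 0\<close> by (simp add: divide_right_mono)
  qed
  also have "\<dots> = 2 * real (card I) / Q"
    by simp
  finally have "N * \<bar>(\<Prod>i\<in>I. a i / Q) - (\<Prod>i\<in>I. u i)\<bar> \<le> N * (2 * real (card I) / Q)"
    by (intro mult_left_mono) auto
  also have "\<dots> \<le> 2 * real (card I)"
    using assms(2,3) by (simp add: field_simps mult_right_mono)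
  finally show ?thesis
    by (simp add: abs_mult right_diff_distrib[symmetric])
qed

lemma nat_floor_mult_bounds:
  fixes v :: real and Q :: nat
  assumes "0 \<le> v" "v \<le> 1"
  defines "U \<equiv> nat \<lfloor>v * Q\<rfloor>"
  shows "U \<le> Q" "real U \<le> v * Q" "v * Q < U + 1"
proof -
  have "0 \<le> v * Q" "v * Q \<le> Q"
    using assms by (simp_all add: mult_left_le_one_le)
  then have "real U = \<lfloor>v * Q\<rfloor>"
    by (simp add: U_def)
  then show "real U \<le> v * Q" "v * Q < U + 1"
    by linarith+
  show "U \<le> Q"
    unfolding U_def using \<open>v * Q \<le> Q\<close> by (simp add: nat_le_iff floor_le_iff)
qed

text \<open>Rounding each edge of a box down, respectively up, to multiples of \<open>1/Q\<close> (with one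
  unit of slack) gives two boxes made of whole cells of the grid \<open>(1/Q) \<nat>\<^sup>I\<close>, between which the
  points of the original box are caught.\<close>

lemma count_box_sandwich:
  fixes X :: "nat \<Rightarrow> 'i \<Rightarrow> real" and P :: "nat \<Rightarrow> 'i \<Rightarrow> nat" and Q :: nat and E :: real
  assumes "finite I" "Q > 0" "real N \<le> Q" and u: "\<forall>i\<in>I. 0 \<le> u i \<and> u i \<le> 1"
    and P_less: "\<And>n i. i \<in> I \<Longrightarrow> P n i < Q"
    and X_bounds: "\<And>n i. i \<in> I \<Longrightarrow> P n i / Q \<le> X n i \<and> X n i \<le> (real (P n i) + 1) / Q"
    and grid_boxes: "\<And>A. \<forall>i\<in>I. A i \<le> Q \<Longrightarrow>
      count_approx N (\<lambda>n. \<forall>i\<in>I. P n i < A i) (\<Prod>i\<in>I. A i / Q) E"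
  shows "count_approx N (\<lambda>n. \<forall>i\<in>I. X n i < u i) (\<Prod>i\<in>I. u i) (E + 2 * real (card I))"
proof -
  define U where "U i = nat \<lfloor>u i * Q\<rfloor>" for i
  have U: "U i \<le> Q \<and> real (U i) \<le> u i * Q \<and> u i * Q < U i + 1" if "i \<in> I" for i
    using nat_floor_mult_bounds[of "u i" Q] u that unfolding U_def by auto
  define inner where "inner i = U i - 1" for i
  define outer where "outer i = min (U i + 1) Q" for i
  show ?thesis
  proof (rule count_approx_sandwich)
    show "count_approx N (\<lambda>n. \<forall>i\<in>I. P n i < inner i) (\<Prod>i\<in>I. inner i / Q) E"
      "count_approx N (\<lambda>n. \<forall>i\<in>I. P n i < outer i) (\<Prod>i\<in>I. outer i / Q) E"
      using U by (intro grid_boxes; force simp: inner_def outer_def)+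
    show "\<forall>i\<in>I. X n i < u i" if "\<forall>i\<in>I. P n i < inner i" for n
    proof
      fix i assume "i \<in> I"
      then have "(real (P n i) + 1) / Q < u i"
        using that U[of i] \<open>Q > 0\<close> by (fastforce simp: inner_def divide_less_eq)
      then show "X n i < u i"
        using X_bounds[OF \<open>i \<in> I\<close>, of n] by linarith
    qed
    show "\<forall>i\<in>I. P n i < outer i" if "\<forall>i\<in>I. X n i < u i" for n
    proof
      fix i assume "i \<in> I"
      then have "real (P n i) / Q < u i"
        using that X_bounds[of i n] by fastforce
      then have "real (P n i) < u i * Q"
        using \<open>Q > 0\<close> by (simp add: divide_less_eq)
      then have "real (P n i) < real (U i + 1)"
        using U[OF \<open>i \<in> I\<close>] by linarith
      then show "P n i < outer i"
        unfolding outer_def of_nat_less_iff using P_less[OF \<open>i \<in> I\<close>] by simp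
    qed
    have "real (inner i) \<le> Q \<and> \<bar>real (inner i) - u i * Q\<bar> \<le> 2" if "i \<in> I" for i
      using U[OF that] unfolding inner_def by (cases "U i") (auto simp: abs_le_iff)
    then show "\<bar>N * (\<Prod>i\<in>I. inner i / Q) - N * (\<Prod>i\<in>I. u i)\<bar> \<le> 2 * real (card I)"
      using u assms(1-3) by (intro grid_volume_approx) auto
    have "real (outer i) \<le> Q \<and> \<bar>real (outer i) - u i * Q\<bar> \<le> 2" if "i \<in> I" for i
      using U[OF that] u that unfolding outer_def by (cases "U i + 1 \<le> Q") (auto simp: abs_le_iff)
    then show "\<bar>N * (\<Prod>i\<in>I. outer i / Q) - N * (\<Prod>i\<in>I. u i)\<bar> \<le> 2 * real (card I)"
      using u assms(1-3) by (intro grid_volume_approx) auto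
  qed
qed

lemma star_discrepancy_le:
  assumes "N > 0"
    and "\<And>u. \<forall>i\<in>{1..s}. 0 \<le> u i \<and> u i \<le> 1 \<Longrightarrow>
      count_approx N (\<lambda>n. \<forall>i\<in>{1..s}. x n i < u i) (\<Prod>i=1..s. u i) B"
  shows "N * star_discrepancy s N x \<le> B"
proof -
  have "star_discrepancy s N x \<le> B / N"
    unfolding star_discrepancy_def
  proof (rule cSUP_least)
    show "{u. \<forall>i\<in>{1..s}. 0 \<le> u i \<and> u i \<le> (1::real)} \<noteq> {}"
      by (auto intro!: exI[of _ "\<lambda>_. 0"])
    fix u :: "nat \<Rightarrow> real" assume "u \<in> {u. \<forall>i\<in>{1..s}. 0 \<le> u i \<and> u i \<le> 1}"
    then have "\<bar>real (card {n. n < N \<and> (\<forall>i\<in>{1..s}. x n i < u i)}) - N * (\<Prod>i=1..s. u i)\<bar> / N \<le> B / N"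
      using assms(2)[of u] unfolding count_approx_def by (intro divide_right_mono) auto
    moreover have "real (card {n. n < N \<and> (\<forall>i\<in>{1..s}. x n i < u i)}) / N - (\<Prod>i=1..s. u i)
        = (real (card {n. n < N \<and> (\<forall>i\<in>{1..s}. x n i < u i)}) - N * (\<Prod>i=1..s. u i)) / N"
      using \<open>N > 0\<close> by (simp add: field_simps)
    ultimately show "\<bar>real (card {n. n < N \<and> (\<forall>i\<in>{1..s}. x n i < u i)}) / N - (\<Prod>i=1..s. u i)\<bar> \<le> B / N"
      by (simp add: abs_divide)
  qed
  then show ?thesis
    using \<open>N > 0\<close> by (simp add: field_simps)
qed

lemma digit_length_log_bound:
  fixes q N :: nat
  assumes "q \<ge> 2" "N \<ge> 2"
  shows "\<exists>L. real N \<le> real q ^ L \<and> 1 + (real q - 1) * L \<le> (2 * real q - 1) / ln 2 * ln N"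
proof -
  define lg where "lg = log 2 (real N)"
  have "lg \<ge> 1"
    unfolding lg_def using assms(2) by (subst le_log_iff) auto
  define L where "L = nat \<lceil>lg\<rceil>"
  have L: "lg \<le> real L" "real L \<le> 2 * lg"
    using \<open>lg \<ge> 1\<close> by (simp_all add: L_def) linarith
  have "real N = 2 powr lg"
    unfolding lg_def using assms(2) by simp
  also have "\<dots> \<le> 2 powr real L"
    using L by (intro powr_mono) auto
  also have "\<dots> = 2 ^ L"
    by (simp add: powr_realpow)
  also have "\<dots> \<le> real q ^ L"
    using assms(1) by (intro power_mono) auto
  finally have "real N \<le> real q ^ L" .
  moreover have "1 + (real q - 1) * L \<le> lg + (real q - 1) * (2 * lg)"
    using L \<open>lg \<ge> 1\<close> assms(1) by (intro add_mono mult_left_mono) auto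
  moreover have "lg + (real q - 1) * (2 * lg) = (2 * real q - 1) / ln 2 * ln N"
    by (simp add: lg_def log_def field_simps)
  ultimately show ?thesis by auto
qed

section \<open>The sequences of Algorithm 2\<close>

locale algorithm2 =
  fixes s t :: nat
    and C :: "nat \<Rightarrow> nat \<Rightarrow> nat \<Rightarrow> 'f::{finite,field}"
    and alpha :: "nat \<Rightarrow> nat"
    and psi :: "nat \<Rightarrow> nat \<Rightarrow> 'f"
    and lam :: "nat \<Rightarrow> nat \<Rightarrow> 'f \<Rightarrow> nat"
  assumes finite_rows: "\<And>i. i \<in> {1..s} \<Longrightarrow> finite_row (C i)"
    and rows_indep: "\<And>d. 1 \<le> (\<Sum>i=1..s. d i) \<Longrightarrow> rows_lin_indep s C ((\<Sum>i=1..s. d i) + t) d"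
    and psi_bij: "\<And>r. bij_betw (psi r) {0..<CARD('f)} UNIV"
    and lam_bij: "\<And>i j. i \<in> {1..s} \<Longrightarrow> j \<ge> 1 \<Longrightarrow> bij_betw (lam i j) UNIV {0..<CARD('f)}"
begin

lemma CARD_ge_2: "CARD('f) \<ge> 2"
proof -
  have "card {0::'f, 1} \<le> CARD('f)"
    by (rule card_mono) auto
  then show ?thesis by simp
qed

text \<open>In the notation of Algorithm 2, \<open>field_digit n i j\<close> is the \<open>j\<close>-th entry of the product of
  \<open>C i\<close> with the vector \<open>(psi r (a r))\<^sub>r\<close> built from the digits \<open>a\<close> of \<open>s n\<close>, and
  \<open>digit n i j = lam i j (field_digit n i j)\<close> is the \<open>j\<close>-th digit of the \<open>i\<close>-th coordinate.\<close>

definition field_digit :: "nat \<Rightarrow> nat \<Rightarrow> nat \<Rightarrow> 'f" where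
  "field_digit n i j = (\<Sum>r\<in>{r. C i j r \<noteq> 0}. C i j r * psi r (qadic_add_nat CARD('f) n alpha r))"

definition digit :: "nat \<Rightarrow> nat \<Rightarrow> nat \<Rightarrow> nat" where
  "digit n i j = lam i j (field_digit n i j)"

definition digit_prefix :: "nat \<Rightarrow> nat \<Rightarrow> nat \<Rightarrow> nat" where
  "digit_prefix n i l = digits_value CARD('f) (digit n i) l"

lemma digit_less: "i \<in> {1..s} \<Longrightarrow> digit n i (Suc j) < CARD('f)"
  using lam_bij[of i "Suc j"] by (auto simp: digit_def bij_betw_def)

lemma digit_eq_iff:
  assumes "i \<in> {1..s}" "j \<ge> 1" "y < CARD('f)"
  shows "digit n i j = y \<longleftrightarrow> field_digit n i j = inv_into UNIV (lam i j) y"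
proof -
  have "bij_betw (lam i j) UNIV {0..<CARD('f)}"
    using lam_bij assms(1,2) by blast
  moreover have "y \<in> range (lam i j)"
    using calculation assms(3) by (auto simp: bij_betw_def)
  ultimately show ?thesis
    by (auto simp: digit_def bij_betw_def inv_into_f_f f_inv_into_f)
qed

lemma digit_prefix_0 [simp]: "digit_prefix n i 0 = 0"
  by (simp add: digit_prefix_def)

lemma digit_prefix_less: "i \<in> {1..s} \<Longrightarrow> digit_prefix n i l < CARD('f) ^ l"
  unfolding digit_prefix_def by (rule digits_value_less) (rule digit_less)

lemma digit_prefix_Suc_div: "i \<in> {1..s} \<Longrightarrow> digit_prefix n i (Suc l) div CARD('f) = digit_prefix n i l"
  unfolding digit_prefix_def by (rule digits_value_Suc_div) (rule digit_less)

lemma alg2_coord_bounds: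
  fixes n L :: nat
  assumes "i \<in> {1..s}"
  defines "x \<equiv> alg2_coord psi C lam (qadic_add_nat CARD('f) n alpha) i"
  shows "real (digit_prefix n i L) / real CARD('f) ^ L \<le> x
    \<and> x \<le> (real (digit_prefix n i L) + 1) / real CARD('f) ^ L"
proof -
  have "x = (\<Sum>j. real (digit n i (Suc j)) / real CARD('f) ^ Suc j)"
    by (simp add: x_def alg2_coord_def digit_def field_digit_def)
  then show ?thesis
    using digit_expansion_bounds[where q = "CARD('f)" and y = "digit n i" and L = L]
      digit_less[OF assms(1)] CARD_ge_2 by (simp add: digit_prefix_def)
qed

definition shifted_field_digit :: "nat \<Rightarrow> nat \<Rightarrow> nat \<Rightarrow> nat \<Rightarrow> 'f" where
  "shifted_field_digit m w i j = (\<Sum>r\<in>{r. C i j r \<noteq> 0}. C i j r * psi r (tail_digit CARD('f) alpha m w r))"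

lemma field_digit_eq_shifted:
  "field_digit n i j = shifted_field_digit m (n + (\<Sum>k<m. alpha k * CARD('f) ^ k)) i j"
  by (simp add: field_digit_def shifted_field_digit_def qadic_add_nat_eq_tail_digit[where m = m])

definition digit_vector :: "nat \<Rightarrow> nat \<Rightarrow> nat \<Rightarrow> 'f" where
  "digit_vector m \<rho> = restrict (\<lambda>r. psi r (\<rho> div CARD('f) ^ r mod CARD('f))) {..<m}"

lemma shifted_field_digit_block:
  assumes "i \<in> {1..s}" "j \<ge> 1" "\<rho> < CARD('f) ^ m"
  shows "shifted_field_digit m (h * CARD('f) ^ m + \<rho>) i j = (\<Sum>r<m. C i j r * digit_vector m \<rho> r)
    + (\<Sum>r\<in>{r. C i j r \<noteq> 0} - {..<m}. C i j r * psi r (tail_digit CARD('f) alpha m (h * CARD('f) ^ m) r))"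
proof -
  let ?R = "{r. C i j r \<noteq> 0}"
  have "finite ?R"
    using finite_rows[OF assms(1)] assms(2) by (simp add: finite_row_def)
  then have "shifted_field_digit m (h * CARD('f) ^ m + \<rho>) i j
      = (\<Sum>r\<in>?R \<inter> {..<m}. C i j r * psi r (tail_digit CARD('f) alpha m (h * CARD('f) ^ m + \<rho>) r))
      + (\<Sum>r\<in>?R - {..<m}. C i j r * psi r (tail_digit CARD('f) alpha m (h * CARD('f) ^ m + \<rho>) r))"
    unfolding shifted_field_digit_def by (rule sum.Int_Diff)
  also have "(\<Sum>r\<in>?R \<inter> {..<m}. C i j r * psi r (tail_digit CARD('f) alpha m (h * CARD('f) ^ m + \<rho>) r))
      = (\<Sum>r<m. C i j r * digit_vector m \<rho> r)"
    by (rule sum.mono_neutral_cong_left) (auto simp: digit_vector_def tail_digit_low)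
  also have "(\<Sum>r\<in>?R - {..<m}. C i j r * psi r (tail_digit CARD('f) alpha m (h * CARD('f) ^ m + \<rho>) r))
      = (\<Sum>r\<in>?R - {..<m}. C i j r * psi r (tail_digit CARD('f) alpha m (h * CARD('f) ^ m) r))"
    using assms(3) by (intro sum.cong) (auto simp: tail_digit_high)
  finally show ?thesis .
qed

text \<open>Within a block of \<open>q\<^sup>m\<close> consecutive inputs only the lowest \<open>m\<close> input digits vary, and they
  run through all of \<open>\<bbbF>\<^sub>q\<^sup>m\<close>; the prescribed output digits form a linear system of full rank
  in them.\<close>

lemma card_block_field_digits:
  assumes "rows_lin_indep s C m d"
  shows "card {\<rho>. \<rho> < CARD('f) ^ m \<and>
      (\<forall>i\<in>{1..s}. \<forall>j\<in>{1..d i}. shifted_field_digit m (h * CARD('f) ^ m + \<rho>) i j = \<gamma> i j)}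
    = CARD('f) ^ (m - (\<Sum>i=1..s. d i))"
proof -
  let ?K = "SIGMA i:{1..s}. {1..d i}"
  define high where "high i j = (\<Sum>r\<in>{r. C i j r \<noteq> 0} - {..<m}.
    C i j r * psi r (tail_digit CARD('f) alpha m (h * CARD('f) ^ m) r))" for i j
  let ?S = "linear_solutions (\<lambda>l r. C (fst l) (snd l) r) ?K {..<m}
    (\<lambda>l. \<gamma> (fst l) (snd l) - high (fst l) (snd l))"
  have "{\<rho>. \<rho> < CARD('f) ^ m \<and>
      (\<forall>i\<in>{1..s}. \<forall>j\<in>{1..d i}. shifted_field_digit m (h * CARD('f) ^ m + \<rho>) i j = \<gamma> i j)}
      = {\<rho> \<in> {..<CARD('f) ^ m}. digit_vector m \<rho> \<in> ?S}"
    by (auto simp: linear_solutions_def shifted_field_digit_block high_def digit_vector_def eq_diff_eq)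
  moreover have "card {\<rho> \<in> {..<CARD('f) ^ m}. digit_vector m \<rho> \<in> ?S} = card ?S"
    using bij_betw_digit_vectors[OF psi_bij, where m = m]
    by (intro card_filter_bij_betw) (auto simp: digit_vector_def linear_solutions_def)
  moreover have "card ?S = CARD('f) ^ (m - (\<Sum>i=1..s. d i))"
    using lin_indep_rows_if_rows_lin_indep[OF assms] by (simp add: card_linear_solutions card_SigmaI)
  ultimately show ?thesis
    by simp
qed

lemma card_field_digits_approx:
  "\<bar>real (card {n. n < N \<and> (\<forall>i\<in>{1..s}. \<forall>j\<in>{1..d i}. field_digit n i j = \<gamma> i j)})
     - real N / real CARD('f) ^ (\<Sum>i=1..s. d i)\<bar> \<le> 2 * real CARD('f) ^ t"
proof (cases "(\<Sum>i=1..s. d i) = 0")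
  case True
  then have "{n. n < N \<and> (\<forall>i\<in>{1..s}. \<forall>j\<in>{1..d i}. field_digit n i j = \<gamma> i j)} = {..<N}"
    by auto
  then show ?thesis
    using True by simp
next
  case False
  define k where "k = (\<Sum>i=1..s. d i)"
  define m where "m = k + t"
  define a where "a = (\<Sum>r<m. alpha r * CARD('f) ^ r)"
  define P where "P w \<longleftrightarrow> (\<forall>i\<in>{1..s}. \<forall>j\<in>{1..d i}. shifted_field_digit m w i j = \<gamma> i j)" for w
  have "1 \<le> k"
    using False unfolding k_def by linarith
  then have indep: "rows_lin_indep s C m d"
    unfolding m_def k_def by (rule rows_indep)
  have "card {\<rho>. \<rho> < CARD('f) ^ m \<and> P (h * CARD('f) ^ m + \<rho>)} = CARD('f) ^ t" for h
    using card_block_field_digits[OF indep, of h \<gamma>] unfolding P_def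
    by (simp add: m_def k_def)
  then have "\<bar>real (card {n. n < N \<and> P (n + a)}) - real N * real (CARD('f) ^ t) / real (CARD('f) ^ m)\<bar>
      \<le> 2 * real (CARD('f) ^ t)"
    by (intro card_shifted_periodic_approx) simp_all
  moreover have "{n. n < N \<and> (\<forall>i\<in>{1..s}. \<forall>j\<in>{1..d i}. field_digit n i j = \<gamma> i j)} = {n. n < N \<and> P (n + a)}"
    by (simp add: P_def a_def field_digit_eq_shifted[where m = m])
  moreover have "real N * real (CARD('f) ^ t) / real (CARD('f) ^ m) = real N / real CARD('f) ^ k"
    by (simp add: m_def power_add)
  ultimately show ?thesis
    by (simp add: k_def)
qed

lemma count_approx_elementary_box:
  assumes "\<forall>i\<in>{1..s}. b i < CARD('f) ^ d i"
  shows "count_approx N (\<lambda>n. \<forall>i\<in>{1..s}. digit_prefix n i (d i) = b i)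
    (\<Prod>i=1..s. 1 / real CARD('f) ^ d i) (2 * real CARD('f) ^ t)"
proof -
  define \<gamma> where "\<gamma> i j = inv_into UNIV (lam i j) (b i div CARD('f) ^ (d i - j) mod CARD('f))" for i j
  have "digit_prefix n i (d i) = b i \<longleftrightarrow> (\<forall>j\<in>{1..d i}. field_digit n i j = \<gamma> i j)"
    if "i \<in> {1..s}" for n i
    using digits_value_eq_iff[of "digit n i" "CARD('f)" "b i" "d i"] digit_less[OF that]
      digit_eq_iff[OF that] assms that by (simp add: \<gamma>_def digit_prefix_def)
  then have "{n. n < N \<and> (\<forall>i\<in>{1..s}. digit_prefix n i (d i) = b i)}
      = {n. n < N \<and> (\<forall>i\<in>{1..s}. \<forall>j\<in>{1..d i}. field_digit n i j = \<gamma> i j)}"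
    by auto
  moreover have "(\<Prod>i=1..s. 1 / real CARD('f) ^ d i) = 1 / real CARD('f) ^ (\<Sum>i=1..s. d i)"
    by (simp add: power_sum prod_dividef)
  ultimately show ?thesis
    using card_field_digits_approx[of N d \<gamma>] unfolding count_approx_def by simp
qed

lemma count_approx_pin_coordinate:
  assumes "i0 \<in> {1..s} - I"
    and "count_approx N
      (\<lambda>n. (\<forall>i\<in>I. digit_prefix n i L < A i)
         \<and> (\<forall>i\<in>{1..s} - I. digit_prefix n i ((d(i0 := l)) i) = (b(i0 := c)) i))
      ((\<Prod>i\<in>I. A i / real CARD('f) ^ L) * (\<Prod>i\<in>{1..s} - I. 1 / real CARD('f) ^ (d(i0 := l)) i)) E"
  shows "count_approx N
      (\<lambda>n. digit_prefix n i0 l = c \<and> ((\<forall>i\<in>I. digit_prefix n i L < A i)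
         \<and> (\<forall>i\<in>{1..s} - insert i0 I. digit_prefix n i (d i) = b i)))
      ((\<Prod>i\<in>I. A i / real CARD('f) ^ L) * (\<Prod>i\<in>{1..s} - insert i0 I. 1 / real CARD('f) ^ d i)
         / real CARD('f) ^ l) E"
proof -
  have rest: "{1..s} - I = insert i0 ({1..s} - insert i0 I)"
    using assms(1) by auto
  have "(\<Prod>i\<in>{1..s} - insert i0 I. 1 / real CARD('f) ^ (d(i0 := l)) i)
      = (\<Prod>i\<in>{1..s} - insert i0 I. 1 / real CARD('f) ^ d i)"
    by (rule prod.cong) auto
  then have volume: "(\<Prod>i\<in>{1..s} - I. 1 / real CARD('f) ^ (d(i0 := l)) i)
      = 1 / real CARD('f) ^ l * (\<Prod>i\<in>{1..s} - insert i0 I. 1 / real CARD('f) ^ d i)"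
    unfolding rest by simp
  from assms(2) show ?thesis
  proof (rule count_approx_cong)
    show "(\<forall>i\<in>I. digit_prefix n i L < A i)
        \<and> (\<forall>i\<in>{1..s} - I. digit_prefix n i ((d(i0 := l)) i) = (b(i0 := c)) i)
      \<longleftrightarrow> digit_prefix n i0 l = c \<and> ((\<forall>i\<in>I. digit_prefix n i L < A i)
         \<and> (\<forall>i\<in>{1..s} - insert i0 I. digit_prefix n i (d i) = b i))" for n
      unfolding rest by auto
    show "(\<Prod>i\<in>I. A i / real CARD('f) ^ L) * (\<Prod>i\<in>{1..s} - I. 1 / real CARD('f) ^ (d(i0 := l)) i)
      = (\<Prod>i\<in>I. A i / real CARD('f) ^ L) * (\<Prod>i\<in>{1..s} - insert i0 I. 1 / real CARD('f) ^ d i)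
         / real CARD('f) ^ l"
      unfolding volume by simp
  qed simp
qed

lemma count_approx_mixed_box:
  assumes "finite I" "I \<subseteq> {1..s}" "\<forall>i\<in>I. A i \<le> CARD('f) ^ L" "\<forall>i\<in>{1..s} - I. b i < CARD('f) ^ d i"
  shows "count_approx N
    (\<lambda>n. (\<forall>i\<in>I. digit_prefix n i L < A i) \<and> (\<forall>i\<in>{1..s} - I. digit_prefix n i (d i) = b i))
    ((\<Prod>i\<in>I. A i / real CARD('f) ^ L) * (\<Prod>i\<in>{1..s} - I. 1 / real CARD('f) ^ d i))
    ((1 + (real CARD('f) - 1) * L) ^ card I * (2 * real CARD('f) ^ t))"
  using assms
proof (induction I arbitrary: d b rule: finite_subset_induct')
  case empty
  then show ?case
    using count_approx_elementary_box[of b d N] by simp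
next
  case (insert i0 I)
  let ?E = "(1 + (real CARD('f) - 1) * L) ^ card I * (2 * real CARD('f) ^ t)"
  define R where "R n \<longleftrightarrow> (\<forall>i\<in>I. digit_prefix n i L < A i)
    \<and> (\<forall>i\<in>{1..s} - insert i0 I. digit_prefix n i (d i) = b i)" for n
  define V where "V = (\<Prod>i\<in>I. A i / real CARD('f) ^ L) * (\<Prod>i\<in>{1..s} - insert i0 I. 1 / real CARD('f) ^ d i)"
  have "count_approx N (\<lambda>n. digit_prefix n i0 l = c \<and> R n) (V / real CARD('f) ^ l) ?E"
    if "c < CARD('f) ^ l" for l c
    unfolding R_def V_def
  proof (rule count_approx_pin_coordinate)
    show "i0 \<in> {1..s} - I"
      using insert.hyps by simp
    show "count_approx N
      (\<lambda>n. (\<forall>i\<in>I. digit_prefix n i L < A i)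
         \<and> (\<forall>i\<in>{1..s} - I. digit_prefix n i ((d(i0 := l)) i) = (b(i0 := c)) i))
      ((\<Prod>i\<in>I. A i / real CARD('f) ^ L) * (\<Prod>i\<in>{1..s} - I. 1 / real CARD('f) ^ (d(i0 := l)) i)) ?E"
      using insert.prems that by (intro insert.IH) auto
  qed
  then have "count_approx N (\<lambda>n. digit_prefix n i0 L < A i0 \<and> R n)
      (V * A i0 / real CARD('f) ^ L) ((1 + (real CARD('f) - 1) * L) * ?E)"
    using insert.prems(1) insert.hyps(2) digit_prefix_Suc_div
    by (intro count_approx_prefix_less[where P = "\<lambda>l n. digit_prefix n i0 l"]) auto
  then show ?case
    using insert.hyps by (elim count_approx_cong) (auto simp: R_def V_def card_insert_if)
qed

lemma count_approx_grid_box: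
  assumes "\<forall>i\<in>{1..s}. A i \<le> CARD('f) ^ L"
  shows "count_approx N (\<lambda>n. \<forall>i\<in>{1..s}. digit_prefix n i L < A i)
    (\<Prod>i=1..s. A i / real CARD('f) ^ L) ((1 + (real CARD('f) - 1) * L) ^ s * (2 * real CARD('f) ^ t))"
  using count_approx_mixed_box[of "{1..s}" A L] assms by (auto elim: count_approx_cong)

lemma star_discrepancy_bound:
  assumes "N > 0" "real N \<le> real CARD('f) ^ L"
  shows "N * star_discrepancy s N (\<lambda>n i. alg2_coord psi C lam (qadic_add_nat CARD('f) n alpha) i)
    \<le> (1 + (real CARD('f) - 1) * L) ^ s * (2 * real CARD('f) ^ t) + 2 * real s"
proof (rule star_discrepancy_le[OF \<open>N > 0\<close>])
  fix u :: "nat \<Rightarrow> real" assume u: "\<forall>i\<in>{1..s}. 0 \<le> u i \<and> u i \<le> 1"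
  let ?E = "(1 + (real CARD('f) - 1) * L) ^ s * (2 * real CARD('f) ^ t)"
  have "count_approx N (\<lambda>n. \<forall>i\<in>{1..s}. alg2_coord psi C lam (qadic_add_nat CARD('f) n alpha) i < u i)
      (\<Prod>i\<in>{1..s}. u i) (?E + 2 * real (card {1..s}))"
  proof (rule count_box_sandwich[where Q = "CARD('f) ^ L" and P = "\<lambda>n i. digit_prefix n i L"])
    show "digit_prefix n i L < CARD('f) ^ L" if "i \<in> {1..s}" for n i
      using that by (rule digit_prefix_less)
    show "real (digit_prefix n i L) / real (CARD('f) ^ L)
        \<le> alg2_coord psi C lam (qadic_add_nat CARD('f) n alpha) i
      \<and> alg2_coord psi C lam (qadic_add_nat CARD('f) n alpha) i
        \<le> (real (digit_prefix n i L) + 1) / real (CARD('f) ^ L)" if "i \<in> {1..s}" for n i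
      using alg2_coord_bounds[OF that, of n L] by simp
    show "count_approx N (\<lambda>n. \<forall>i\<in>{1..s}. digit_prefix n i L < A i)
        (\<Prod>i\<in>{1..s}. real (A i) / real (CARD('f) ^ L)) ?E" if "\<forall>i\<in>{1..s}. A i \<le> CARD('f) ^ L" for A
      using count_approx_grid_box[OF that, of N] by simp
  qed (use u assms(2) in simp_all)
  then show "count_approx N (\<lambda>n. \<forall>i\<in>{1..s}. alg2_coord psi C lam (qadic_add_nat CARD('f) n alpha) i < u i)
      (\<Prod>i=1..s. u i) (?E + 2 * real s)"
    by simp
qed

theorem low_discrepancy:
  "\<exists>c. \<forall>N\<ge>2. real N * star_discrepancy s N (\<lambda>n i. alg2_coord psi C lam (qadic_add_nat CARD('f) n alpha) i)
     \<le> c * ln (real N) ^ s"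
proof -
  define K where "K = (2 * real CARD('f) - 1) / ln 2"
  define E where "E = 2 * real CARD('f) ^ t"
  show ?thesis
  proof (intro exI allI impI)
    fix N :: nat assume "N \<ge> 2"
    then obtain L where L: "real N \<le> real CARD('f) ^ L" "1 + (real CARD('f) - 1) * L \<le> K * ln N"
      using digit_length_log_bound[OF CARD_ge_2] unfolding K_def by blast
    have "1 \<le> ln N / ln 2"
      using \<open>N \<ge> 2\<close> by (simp add: ln_le_cancel_iff)
    have "real N * star_discrepancy s N (\<lambda>n i. alg2_coord psi C lam (qadic_add_nat CARD('f) n alpha) i)
        \<le> (1 + (real CARD('f) - 1) * L) ^ s * E + 2 * real s"
      using star_discrepancy_bound[OF _ L(1)] \<open>N \<ge> 2\<close> by (simp add: E_def)
    also have "\<dots> \<le> (K * ln N) ^ s * E + 2 * real s * (ln N / ln 2) ^ s"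
    proof (rule add_mono)
      show "(1 + (real CARD('f) - 1) * L) ^ s * E \<le> (K * ln N) ^ s * E"
        using L(2) CARD_ge_2 by (intro mult_right_mono power_mono) (auto simp: E_def)
      show "2 * real s \<le> 2 * real s * (ln N / ln 2) ^ s"
        using mult_left_mono[OF one_le_power[OF \<open>1 \<le> ln N / ln 2\<close>, of s], of "2 * real s"] by simp
    qed
    also have "\<dots> = (K ^ s * E + 2 * real s / ln 2 ^ s) * ln N ^ s"
      by (simp add: power_mult_distrib power_divide algebra_simps)
    finally show "real N * star_discrepancy s N (\<lambda>n i. alg2_coord psi C lam (qadic_add_nat CARD('f) n alpha) i)
        \<le> (K ^ s * E + 2 * real s / ln 2 ^ s) * ln N ^ s" .
  qed
qed

end

theorem corollary2:
  fixes s t :: nat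
    and T :: "nat \<Rightarrow> nat"
    and C :: "nat \<Rightarrow> nat \<Rightarrow> nat \<Rightarrow> 'f::{finite,field}"
    and alpha :: "nat \<Rightarrow> nat"
    and psi :: "nat \<Rightarrow> nat \<Rightarrow> 'f"
    and lam :: "nat \<Rightarrow> nat \<Rightarrow> 'f \<Rightarrow> nat"
  assumes "s \<ge> 1"
    and "\<And>m. T m \<le> min m t"
    and "\<And>i. i \<in> {1..s} \<Longrightarrow> finite_row (C i)"
    and "\<And>m d. m > T m \<Longrightarrow> 1 \<le> (\<Sum>i=1..s. d i) \<Longrightarrow> (\<Sum>i=1..s. d i) \<le> m - T m
           \<Longrightarrow> rows_lin_indep s C m d"
    and "qadic CARD('f) alpha"
    and "\<And>r. bij_betw (psi r) {0..<CARD('f)} UNIV"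
    and "\<And>i j. i \<in> {1..s} \<Longrightarrow> j \<ge> 1 \<Longrightarrow> bij_betw (lam i j) UNIV {0..<CARD('f)}"
  shows "\<exists>c. \<forall>N\<ge>2. real N * star_discrepancy s N
            (\<lambda>n i. alg2_coord psi C lam (qadic_add_nat CARD('f) n alpha) i)
          \<le> c * ln (real N) ^ s"
proof -
  have "rows_lin_indep s C ((\<Sum>i=1..s. d i) + t) d" if "1 \<le> (\<Sum>i=1..s. d i)" for d
  proof (rule assms(4))
    have "T ((\<Sum>i=1..s. d i) + t) \<le> t"
      using assms(2) by (metis min.bounded_iff)
    then show "T ((\<Sum>i=1..s. d i) + t) < (\<Sum>i=1..s. d i) + t"
      "(\<Sum>i=1..s. d i) \<le> (\<Sum>i=1..s. d i) + t - T ((\<Sum>i=1..s. d i) + t)"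
      using that by linarith+
  qed (rule that)
  then interpret algorithm2 s t C alpha psi lam
    using assms(3,6,7) by unfold_locales
  show ?thesis
    by (rule low_discrepancy)
qed

end
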